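(* Fix $p\in(0,1]$ and $\lambda\in\mathbb{R}$. For any fixed $T>0$ and $a\in(0,\frac{p}{1+p})$ there exist $b_{T,a}>0$ and $C_{T,a}>0$ such that for all $b\ge b_{T,a}$ and all $t\in(-\infty,T+ap\log b]$, $$|\Psi_b(t-p\log b)-\Theta_h(t)|\le C_{T,a}\,b^{-2p(1-a)}e^{t/p},$$ and the same bound holds for the $t$-derivatives, i.e. $|\Psi_b'(t-p\log b)-\Theta_h'(t)|\le C_{T,a}b^{-2p(1-a)}e^{t/p}$ on the same interval.
   Context: Let $d=2+\frac2p$. For $b>0$ let $f$ be the unique classical solution of $f''(r)+\frac{d-1}{r}f'(r)-r^2f(r)+\lambda f(r)+|f(r)|^{2p}f(r)=0$ for $r>0$ with $f(0)=b$, $f'(0)=0$. Set $\Psi_b(t)=e^{t/p}f(e^t)$ (Emden--Fowler transformation), which solves $\Psi''-\frac{1}{p^2}\Psi+|\Psi|^{2p}\Psi=-\lambda e^{2t}\Psi+e^{4t}\Psi$ and satisfies $\Psi_b(t)=be^{t/p}\left[1-\frac{p(\lambda+b^{2p})}{4(p+1)}e^{2t}+O(e^{4t})\right]$ as $t\to-\infty$. Let $\Theta_h(t)=\dfrac{e^{t/p}}{(1+\alpha_pe^{2t})^{1/p}}$ with $\alpha_p=\frac{p^2}{4(1+p)}$, the positive homoclinic solution of $\Theta''-\frac1{p^2}\Theta+|\Theta|^{2p}\Theta=0$. *)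

theory Defs
  imports "HOL-Analysis.Analysis"
begin

definition dim_p :: "real \<Rightarrow> real" where
  "dim_p p = 2 + 2 / p"

definition radial_sol :: "real \<Rightarrow> real \<Rightarrow> real \<Rightarrow> (real \<Rightarrow> real) \<Rightarrow> bool" where
  "radial_sol p lam b f \<longleftrightarrow>
     f 0 = b \<and>
     (f has_real_derivative 0) (at 0 within {0..}) \<and>
     (\<exists>f1 f2. \<forall>r>0.
        (f has_real_derivative f1 r) (at r) \<and>
        (f1 has_real_derivative f2 r) (at r) \<and>
        f2 r + (dim_p p - 1) / r * f1 r - r\<^sup>2 * f r + lam * f r
          + \<bar>f r\<bar> powr (2 * p) * f r = 0)"

definition Psi :: "real \<Rightarrow> (real \<Rightarrow> real) \<Rightarrow> real \<Rightarrow> real" where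
  "Psi p f t = exp (t / p) * f (exp t)"

definition alpha_p :: "real \<Rightarrow> real" where
  "alpha_p p = p\<^sup>2 / (4 * (1 + p))"

definition Theta_h :: "real \<Rightarrow> real \<Rightarrow> real" where
  "Theta_h p t = exp (t / p) / (1 + alpha_p p * exp (2 * t)) powr (1 / p)"

end

theory Submission
  imports Defs
begin

text \<open>Writing f(r) = b w(b^p r) turns the radial equation into
  w'' + (d - 1)/z w' + |w|^(2p) w = \<epsilon>^2 z^2 w - \<lambda> \<epsilon> w with \<epsilon> = b^(-2p) and w(0) = 1.
  Its \<epsilon> = 0 limit is solved by the ground state W(z) = (1 + \<alpha>_p z^2)^(-1/p), and the
  Emden--Fowler transforms of w and W are \<Psi>_b(t - p log b) and \<Theta>_h(t). The errors
  v = w - W and y = z (w' - W') are controlled on 0 < z \<le> R = e^T b^(ap) by a barrier: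
  |v| + (p/2) |y| stays below exp(\<Lambda>(z)) P(z), where \<Lambda> absorbs the linearised nonlinearity and
  P the forcing. At z \<le> R the barrier is O(b^(-2p(1-a))), and a < p/(1+p) is exactly what keeps
  the nonlinear correction |v|^(2p) R^2 bounded along the way.\<close>

lemma powr_diff_abs_le:
  fixes x y q :: real
  assumes "0 \<le> x" "0 \<le> y" "1 \<le> q"
  shows "\<bar>x powr q - y powr q\<bar> \<le> q * (max x y) powr (q - 1) * \<bar>x - y\<bar>"
proof -
  have ordered: "u powr q - z powr q \<le> q * u powr (q - 1) * (u - z)" if "0 \<le> z" "z < u" for u z
  proof -
    have "continuous_on {z..u} (\<lambda>s. s powr q)"
      using that assms(3) by (intro continuous_on_powr' continuous_intros) auto
    moreover have deriv: "((\<lambda>s. s powr q) has_real_derivative q * s powr (q - 1)) (at s)"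
      if "z < s" for s
      using that \<open>0 \<le> z\<close> by (auto intro!: derivative_eq_intros)
    ultimately obtain l s where s: "z < s" "s < u"
        "((\<lambda>s. s powr q) has_real_derivative l) (at s)" "u powr q - z powr q = (u - z) * l"
      using MVT [of z u "\<lambda>s. s powr q"] \<open>z < u\<close> real_differentiable_def by blast
    then have "l = q * s powr (q - 1)"
      using deriv DERIV_unique by blast
    have "s powr (q - 1) \<le> u powr (q - 1)"
      using s that assms(3) by (intro powr_mono2) auto
    then have "(u - z) * (q * s powr (q - 1)) \<le> (u - z) * (q * u powr (q - 1))"
      using \<open>z < u\<close> assms(3) by (intro mult_left_mono) auto
    then show ?thesis
      using s \<open>l = _\<close> by (simp add: algebra_simps)
  qed
  have mono: "z powr q \<le> u powr q" if "0 \<le> z" "z \<le> u" for u z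
    using that assms(3) by (intro powr_mono2) auto
  show ?thesis
    using ordered [of y x] ordered [of x y] mono [of y x] mono [of x y] assms
    by (cases x y rule: linorder_cases) (auto simp: max_def)
qed


lemma abs_powr_mult_lipschitz:
  fixes x y q :: real
  assumes "0 < q"
  shows "\<bar>\<bar>x\<bar> powr q * x - \<bar>y\<bar> powr q * y\<bar> \<le> (q + 1) * (max \<bar>x\<bar> \<bar>y\<bar>) powr q * \<bar>x - y\<bar>"
proof -
  define M where "M = (max \<bar>x\<bar> \<bar>y\<bar>) powr q"
  have abs_eq: "\<bar>\<bar>u\<bar> powr q * u\<bar> = \<bar>u\<bar> powr q * \<bar>u\<bar>" for u :: real
    by (simp add: abs_mult)
  have powr_Suc: "\<bar>u\<bar> powr q * \<bar>u\<bar> = \<bar>u\<bar> powr (q + 1)" for u :: real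
    by (cases "u = 0") (auto simp: powr_add)
  show ?thesis
  proof (cases "x * y \<le> 0")
    case True
    have "\<bar>u\<bar> powr q \<le> M" if "u = x \<or> u = y" for u
      unfolding M_def using that assms by (auto intro: powr_mono2)
    then have "\<bar>\<bar>x\<bar> powr q * x\<bar> + \<bar>\<bar>y\<bar> powr q * y\<bar> \<le> M * (\<bar>x\<bar> + \<bar>y\<bar>)"
      unfolding abs_eq distrib_left by (intro add_mono mult_right_mono) auto
    also have "\<dots> = M * \<bar>x - y\<bar>"
      using True by (auto simp: mult_le_0_iff)
    also have "\<dots> \<le> (q + 1) * M * \<bar>x - y\<bar>"
      using assms unfolding M_def
      by (intro mult_right_mono) (auto simp: algebra_simps intro!: mult_nonneg_nonneg)
    finally show ?thesis
      unfolding M_def by linarith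
  next
    case False
    have signed: "\<bar>u\<bar> powr q * u = sgn u * \<bar>u\<bar> powr (q + 1)" for u :: real
      using powr_Suc [of u] by (cases "0 < u") (auto simp: not_less abs_if sgn_if)
    have "sgn x = sgn y" "\<bar>sgn x\<bar> = 1"
      using False by (auto simp: sgn_if zero_less_mult_iff mult_le_0_iff)
    moreover have "\<bar>x - y\<bar> = \<bar>\<bar>x\<bar> - \<bar>y\<bar>\<bar>"
      using False by (auto simp: mult_le_0_iff not_le zero_less_mult_iff)
    ultimately have "\<bar>\<bar>x\<bar> powr q * x - \<bar>y\<bar> powr q * y\<bar> = \<bar>\<bar>x\<bar> powr (q + 1) - \<bar>y\<bar> powr (q + 1)\<bar>"
        "\<bar>x - y\<bar> = \<bar>\<bar>x\<bar> - \<bar>y\<bar>\<bar>"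
      by (simp_all add: signed right_diff_distrib [symmetric] abs_mult)
    then show ?thesis
      using powr_diff_abs_le [of "\<bar>x\<bar>" "\<bar>y\<bar>" "q + 1"] assms by simp
  qed
qed

lemma powr_add_le:
  fixes u z q :: real
  assumes "0 \<le> u" "0 \<le> z" "0 \<le> q"
  shows "(u + z) powr q \<le> 2 powr q * (u powr q + z powr q)"
proof -
  have "(u + z) powr q \<le> (2 * max u z) powr q"
    using assms by (intro powr_mono2) auto
  also have "\<dots> = 2 powr q * (max u z) powr q"
    using assms by (simp add: powr_mult)
  also have "\<dots> \<le> 2 powr q * (u powr q + z powr q)"
    by (intro mult_left_mono) (auto simp: max_def)
  finally show ?thesis .
qed

lemma abs_powr_mult_perturb:
  fixes W v p :: real
  assumes "0 \<le> W" "0 < p" "p \<le> 1"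
  shows "\<bar>\<bar>W + v\<bar> powr (2*p) * (W + v) - \<bar>W\<bar> powr (2*p) * W\<bar>
           \<le> 12 * (W powr (2*p) + \<bar>v\<bar> powr (2*p)) * \<bar>v\<bar>"
proof -
  have "2 powr (2*p) \<le> (2::real) powr 2"
    using assms by (intro powr_mono) auto
  then have two: "2 powr (2*p) \<le> (4::real)"
    by simp
  have "\<bar>\<bar>W + v\<bar> powr (2*p) * (W + v) - \<bar>W\<bar> powr (2*p) * W\<bar>
      \<le> (2*p + 1) * (max \<bar>W + v\<bar> \<bar>W\<bar>) powr (2*p) * \<bar>v\<bar>"
    using abs_powr_mult_lipschitz [of "2*p" "W + v" W] assms by simp
  also have "\<dots> \<le> 3 * (W + \<bar>v\<bar>) powr (2*p) * \<bar>v\<bar>"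
    using assms by (intro mult_mono powr_mono2) auto
  also have "\<dots> \<le> 3 * (4 * (W powr (2*p) + \<bar>v\<bar> powr (2*p))) * \<bar>v\<bar>"
    using powr_add_le [of W "\<bar>v\<bar>" "2*p"] two assms
    by (intro mult_mono order_trans [OF _ mult_right_mono [OF two]]) auto
  finally show ?thesis
    by simp
qed

definition ground_state :: "real \<Rightarrow> real \<Rightarrow> real" where
  "ground_state p \<rho> = (1 + alpha_p p * \<rho>\<^sup>2) powr (-1/p)"

definition ground_state_deriv :: "real \<Rightarrow> real \<Rightarrow> real" where
  "ground_state_deriv p \<rho> = -(2 * alpha_p p / p) * \<rho> * (1 + alpha_p p * \<rho>\<^sup>2) powr (-1/p - 1)"

lemma alpha_p_pos: "0 < p \<Longrightarrow> 0 < alpha_p p"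
  by (simp add: alpha_p_def)

lemma one_plus_alpha_p_pos: "0 < p \<Longrightarrow> 0 < 1 + alpha_p p * \<rho>\<^sup>2"
  using alpha_p_pos [of p] by (simp add: add_pos_nonneg)

lemma ground_state_has_derivative:
  "0 < p \<Longrightarrow> (ground_state p has_real_derivative ground_state_deriv p \<rho>) (at \<rho>)"
  unfolding ground_state_def ground_state_deriv_def
  by (rule derivative_eq_intros refl | use one_plus_alpha_p_pos in force)+

lemma ground_state_pos: "0 < p \<Longrightarrow> 0 < ground_state p \<rho>"
  unfolding ground_state_def using one_plus_alpha_p_pos [of p \<rho>] by simp

lemma ground_state_le_one:
  assumes "0 < p"
  shows "ground_state p \<rho> \<le> 1"
proof -
  have "1 \<le> 1 + alpha_p p * \<rho>\<^sup>2"
    using alpha_p_pos [OF assms] by simp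
  then have "(1 + alpha_p p * \<rho>\<^sup>2) powr (-1/p) \<le> 1 powr (-1/p)"
    using assms by (intro powr_mono2') auto
  then show ?thesis
    unfolding ground_state_def by simp
qed

lemma ground_state_zero: "ground_state p 0 = 1"
  unfolding ground_state_def by simp

lemma ground_state_powr:
  assumes "0 < p"
  shows "ground_state p \<rho> powr (2*p) = 1 / (1 + alpha_p p * \<rho>\<^sup>2)\<^sup>2"
proof -
  define s where "s = 1 + alpha_p p * \<rho>\<^sup>2"
  have "0 < s"
    using one_plus_alpha_p_pos [OF assms] s_def by simp
  have "ground_state p \<rho> powr (2*p) = s powr (- 2)"
    unfolding ground_state_def s_def [symmetric] using assms by (simp add: powr_powr)
  also have "\<dots> = 1 / s\<^sup>2"
    using \<open>0 < s\<close> by (simp add: powr_minus_divide powr_realpow)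
  finally show ?thesis
    unfolding s_def .
qed

lemma ground_state_deriv_has_derivative:
  assumes p: "0 < p" and \<rho>: "\<rho> \<noteq> 0"
  shows "(ground_state_deriv p has_real_derivative
           -(dim_p p - 1) / \<rho> * ground_state_deriv p \<rho>
           - \<bar>ground_state p \<rho>\<bar> powr (2*p) * ground_state p \<rho>) (at \<rho>)"
proof -
  define s where "s = 1 + alpha_p p * \<rho>\<^sup>2"
  define A where "A = s powr (-1/p - 2)"
  have s0: "0 < s"
    using one_plus_alpha_p_pos [OF p] s_def by simp
  have "s powr (-1/p - 1) = s powr (1 + (-1/p - 2))"
    by (rule arg_cong [where f="(powr) s"]) simp
  also have "\<dots> = s * A"
    unfolding A_def powr_add using s0 by simp
  finally have e1: "s powr (-1/p - 1) = s * A" .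
  have e2: "s powr (-1/p - 1 - 1) = A"
    unfolding A_def by (simp add: algebra_simps)
  have e3: "\<bar>ground_state p \<rho>\<bar> powr (2*p) * ground_state p \<rho> = A"
  proof -
    have "\<bar>ground_state p \<rho>\<bar> powr (2*p) = s powr (-2)"
      using s0 p unfolding ground_state_def s_def [symmetric] by (simp add: powr_powr)
    then show ?thesis
      unfolding A_def ground_state_def s_def [symmetric] using s0
      by (simp add: powr_add [symmetric]) (rule arg_cong [where f="\<lambda>e. s powr e"]; simp)
  qed
  show ?thesis
    unfolding ground_state_deriv_def
    apply (rule derivative_eq_intros refl | use one_plus_alpha_p_pos [OF p] in force)+
    unfolding s_def [symmetric] e1 e2 e3 [unfolded ground_state_deriv_def] dim_p_def
    using p \<rho> s0 alpha_p_def [of p]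
    by (simp add: s_def field_simps power2_eq_square) algebra
qed

lemma Theta_h_eq_Psi: "Theta_h p = Psi p (ground_state p)"
  unfolding Theta_h_def Psi_def ground_state_def
  by (auto simp: powr_minus_divide divide_inverse power2_eq_square exp_add [symmetric])

lemma Psi_has_derivative:
  assumes "(g has_real_derivative g') (at (exp t))"
  shows "(Psi p g has_real_derivative exp (t/p) * (g (exp t) / p + exp t * g')) (at t)"
proof -
  have "((\<lambda>t. g (exp t)) has_real_derivative g' * exp t) (at t)"
    using DERIV_chain2 [OF assms DERIV_exp] by simp
  then have "((\<lambda>t. exp (t/p) * g (exp t)) has_real_derivative
               exp (t/p) * (1/p) * g (exp t) + exp (t/p) * (g' * exp t)) (at t)"
    by (auto simp: divide_inverse intro!: derivative_eq_intros)
  then show ?thesis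
    unfolding Psi_def [abs_def] by (simp add: algebra_simps)
qed

definition rescale :: "real \<Rightarrow> real \<Rightarrow> (real \<Rightarrow> real) \<Rightarrow> real \<Rightarrow> real" where
  "rescale p b f z = f (z / b powr p) / b"

lemma Psi_rescale:
  assumes "0 < b" "0 < p"
  shows "Psi p f = (\<lambda>s. Psi p (rescale p b f) (s + p * ln b))"
proof
  fix s
  have "exp ((s + p * ln b) / p) = exp (s/p) * b"
    using assms by (simp add: add_divide_distrib exp_add)
  moreover have "exp (s + p * ln b) / b powr p = exp s"
    using assms by (simp add: exp_add powr_def)
  ultimately show "Psi p f s = Psi p (rescale p b f) (s + p * ln b)"
    unfolding Psi_def rescale_def using assms by simp
qed

lemma Psi_rescale_diff:
  assumes "0 < b" "0 < p" and dw: "(rescale p b f has_real_derivative w1) (at (exp t))"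
  defines "v \<equiv> rescale p b f (exp t) - ground_state p (exp t)"
  shows "Psi p f (t - p * ln b) - Theta_h p t = exp (t/p) * v"
    and "deriv (Psi p f) (t - p * ln b) - deriv (Theta_h p) t
           = exp (t/p) * (v / p + exp t * (w1 - ground_state_deriv p (exp t)))"
proof -
  have shift: "Psi p f = (\<lambda>s. Psi p (rescale p b f) (s + p * ln b))"
    using Psi_rescale [OF assms(1,2)] .
  then have "Psi p f (t - p * ln b) = Psi p (rescale p b f) t"
    by simp
  then show "Psi p f (t - p * ln b) - Theta_h p t = exp (t/p) * v"
    unfolding v_def Theta_h_eq_Psi by (simp add: Psi_def algebra_simps)
  have "(Psi p (rescale p b f) has_real_derivative
          exp (t/p) * (rescale p b f (exp t) / p + exp t * w1)) (at ((t - p * ln b) + p * ln b))"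
    using Psi_has_derivative [OF dw] by simp
  then have "deriv (Psi p f) (t - p * ln b) = exp (t/p) * (rescale p b f (exp t) / p + exp t * w1)"
    unfolding shift DERIV_shift by (rule DERIV_imp_deriv)
  moreover have "deriv (Theta_h p) t
      = exp (t/p) * (ground_state p (exp t) / p + exp t * ground_state_deriv p (exp t))"
    unfolding Theta_h_eq_Psi
    by (rule DERIV_imp_deriv [OF Psi_has_derivative [OF ground_state_has_derivative [OF assms(2)]]])
  ultimately show "deriv (Psi p f) (t - p * ln b) - deriv (Theta_h p) t
      = exp (t/p) * (v / p + exp t * (w1 - ground_state_deriv p (exp t)))"
    unfolding v_def by (simp add: algebra_simps diff_divide_distrib)
qed

lemma first_zero_crossing:
  fixes h :: "real \<Rightarrow> real"
  assumes cont: "continuous_on {a..b} h" and "h a < 0" "0 \<le> h b" "a \<le> b"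
  obtains c where "a < c" "c \<le> b" "h c = 0" "\<And>x. a \<le> x \<Longrightarrow> x < c \<Longrightarrow> h x < 0"
proof -
  define S where "S = {a..b} \<inter> h -` {0..}"
  have "closed S"
    unfolding S_def by (rule continuous_closed_preimage [OF cont]) auto
  moreover have "b \<in> S" "bdd_below S"
    using assms unfolding S_def by (auto intro: bdd_belowI [of _ a])
  ultimately have cS: "Inf S \<in> S"
    using closed_contains_Inf by blast
  define c where "c = Inf S"
  have below: "h x < 0" if "a \<le> x" "x < c" for x
    using that cInf_lower [OF _ \<open>bdd_below S\<close>, of x] cS
    unfolding c_def S_def by force
  have "a < c" "c \<le> b"
    using cS \<open>h a < 0\<close> unfolding c_def S_def by (auto simp: le_less)
  moreover have "h c = 0"
  proof -
    obtain z where z: "a \<le> z" "z \<le> c" "h z = 0"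
      using IVT' [of h a 0 c] cS \<open>h a < 0\<close> \<open>c \<le> b\<close>
        continuous_on_subset [OF cont, of "{a..c}"] unfolding c_def S_def by auto
    then show ?thesis
      using below [of z] by (cases "z = c") auto
  qed
  ultimately show ?thesis
    using below that by blast
qed

text \<open>At a first point where |v| + c |y| reaches P, the function s1 v + s2 c y - P (with the
  signs s1, s2 of v and y there) vanishes and is negative just to the left, so its derivative
  there cannot be negative.\<close>

lemma barrier_comparison:
  fixes v y P v' y' P' :: "real \<Rightarrow> real" and c x0 R x :: real
  assumes "x0 < R" "0 < c"
    and dv: "\<And>x. x \<in> {x0..R} \<Longrightarrow> (v has_real_derivative v' x) (at x)"
    and dy: "\<And>x. x \<in> {x0..R} \<Longrightarrow> (y has_real_derivative y' x) (at x)"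
    and dP: "\<And>x. x \<in> {x0..R} \<Longrightarrow> (P has_real_derivative P' x) (at x)"
    and start: "\<bar>v x0\<bar> + c * \<bar>y x0\<bar> < P x0"
    and touch: "\<And>x s1 s2. x \<in> {x0<..R} \<Longrightarrow> \<bar>v x\<bar> + c * \<bar>y x\<bar> = P x \<Longrightarrow>
        \<bar>s1\<bar> = 1 \<Longrightarrow> \<bar>s2\<bar> = 1 \<Longrightarrow> s1 * v x = \<bar>v x\<bar> \<Longrightarrow> s2 * y x = \<bar>y x\<bar> \<Longrightarrow>
        s1 * v' x + s2 * c * y' x < P' x"
    and x: "x \<in> {x0..R}"
  shows "\<bar>v x\<bar> + c * \<bar>y x\<bar> < P x"
proof (rule ccontr)
  assume touched: "\<not> ?thesis"
  define h where "h = (\<lambda>x. \<bar>v x\<bar> + c * \<bar>y x\<bar> - P x)"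
  have "continuous_on {x0..x} h"
    unfolding h_def using x
    by (intro continuous_at_imp_continuous_on ballI continuous_intros
        DERIV_isCont [OF dv] DERIV_isCont [OF dy] DERIV_isCont [OF dP]) auto
  then obtain x1 where x1: "x0 < x1" "x1 \<le> x" "h x1 = 0" and below: "\<And>z. x0 \<le> z \<Longrightarrow> z < x1 \<Longrightarrow> h z < 0"
    using first_zero_crossing [of x0 x h] start touched x unfolding h_def by auto
  have x1I: "x1 \<in> {x0..R}" "x1 \<in> {x0<..R}"
    using x1 x by auto
  define s1 where "s1 = (if 0 \<le> v x1 then 1 else -1::real)"
  define s2 where "s2 = (if 0 \<le> y x1 then 1 else -1::real)"
  have s1: "\<bar>s1\<bar> = 1" "s1 * v x1 = \<bar>v x1\<bar>" and s2: "\<bar>s2\<bar> = 1" "s2 * y x1 = \<bar>y x1\<bar>"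
    unfolding s1_def s2_def by auto
  define g where "g = (\<lambda>x. s1 * v x + s2 * c * y x - P x)"
  have "(g has_real_derivative (s1 * v' x1 + s2 * c * y' x1 - P' x1)) (at x1)"
    unfolding g_def using dv dy dP x1I(1) by (auto intro!: derivative_eq_intros)
  moreover have "s1 * v' x1 + s2 * c * y' x1 - P' x1 < 0"
    using touch [OF x1I(2) _ s1(1) s2(1) s1(2) s2(2)] x1(3) unfolding h_def by simp
  ultimately obtain d where "d > 0" and dec: "\<And>e. e > 0 \<Longrightarrow> e < d \<Longrightarrow> g x1 < g (x1 - e)"
    using DERIV_neg_dec_left by blast
  define e where "e = min d (x1 - x0) / 2"
  have e: "0 < e" "e < d" "x0 \<le> x1 - e" "x1 - e < x1"
    using \<open>d > 0\<close> x1 unfolding e_def by (auto simp: min_def field_simps)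
  have "g x1 = 0"
    using s1 s2 x1(3) unfolding g_def h_def by (simp add: algebra_simps)
  moreover have "g (x1 - e) \<le> h (x1 - e)"
  proof -
    have "s1 * v (x1 - e) \<le> \<bar>v (x1 - e)\<bar>" "s2 * y (x1 - e) \<le> \<bar>y (x1 - e)\<bar>"
      using s1(1) s2(1) abs_ge_self [of "s1 * v (x1 - e)"] abs_ge_self [of "s2 * y (x1 - e)"]
      by (simp_all add: abs_mult)
    then have "s1 * v (x1 - e) + c * (s2 * y (x1 - e)) \<le> \<bar>v (x1 - e)\<bar> + c * \<bar>y (x1 - e)\<bar>"
      using \<open>0 < c\<close> by (intro add_mono mult_left_mono) auto
    then show ?thesis
      unfolding g_def h_def by (simp add: mult.assoc mult.left_commute)
  qed
  ultimately show False
    using dec [OF e(1,2)] below [OF e(3,4)] by simp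
qed

text \<open>The exponent is chosen so that its derivative absorbs the linearised nonlinearity,
  and the source term dominates the forcing \<epsilon>^2 z^2 w - lam \<epsilon> w.\<close>

definition barrier_exponent :: "real \<Rightarrow> real \<Rightarrow> real \<Rightarrow> real" where
  "barrier_exponent p D z = 3*p*z\<^sup>2 * (1 / (1 + alpha_p p * z\<^sup>2) + D)"

definition barrier_source :: "real \<Rightarrow> real \<Rightarrow> real \<Rightarrow> real \<Rightarrow> real" where
  "barrier_source p lam \<epsilon> z = \<epsilon> + (1 + \<bar>lam\<bar>) * p * (\<epsilon>\<^sup>2 * z^4 + \<epsilon> * z\<^sup>2)"

definition comparison_barrier :: "real \<Rightarrow> real \<Rightarrow> real \<Rightarrow> real \<Rightarrow> real \<Rightarrow> real" where
  "comparison_barrier p lam \<epsilon> D z = exp (barrier_exponent p D z) * barrier_source p lam \<epsilon> z"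

lemma barrier_exponent_has_derivative:
  assumes "0 < p"
  shows "(barrier_exponent p D has_real_derivative
           6*p*z * (1 / (1 + alpha_p p * z\<^sup>2)\<^sup>2 + D)) (at z)"
proof -
  define s where "s = 1 + alpha_p p * z\<^sup>2"
  have "s \<noteq> 0"
    using one_plus_alpha_p_pos [OF assms, of z] s_def by simp
  have "((\<lambda>z. 3*p*(z\<^sup>2 / (1 + alpha_p p * z\<^sup>2) + D * z\<^sup>2)) has_real_derivative
         3*p*((2*z * s - z\<^sup>2 * (2 * alpha_p p * z)) / s\<^sup>2 + D * (2*z))) (at z)"
    using \<open>s \<noteq> 0\<close> unfolding s_def
    by (auto intro!: derivative_eq_intros simp: power2_eq_square)
  moreover have "3*p*((2*z * s - z\<^sup>2 * (2 * alpha_p p * z)) / s\<^sup>2 + D * (2*z))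
      = 6*p*z * (1 / s\<^sup>2 + D)"
    using \<open>s \<noteq> 0\<close> unfolding s_def by (simp add: field_simps power2_eq_square)
  moreover have "barrier_exponent p D = (\<lambda>z. 3*p*(z\<^sup>2 / (1 + alpha_p p * z\<^sup>2) + D * z\<^sup>2))"
    unfolding barrier_exponent_def by (simp add: algebra_simps)
  ultimately show ?thesis
    unfolding s_def by simp
qed

lemma comparison_barrier_has_derivative:
  assumes "0 < p"
  shows "(comparison_barrier p lam \<epsilon> D has_real_derivative
           exp (barrier_exponent p D z) * (6*p*z * (1 / (1 + alpha_p p * z\<^sup>2)\<^sup>2 + D) * barrier_source p lam \<epsilon> z
             + (1 + \<bar>lam\<bar>) * p * (4 * \<epsilon>\<^sup>2 * z^3 + 2 * \<epsilon> * z))) (at z)"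
proof -
  have "(barrier_source p lam \<epsilon> has_real_derivative
          (1 + \<bar>lam\<bar>) * p * (4 * \<epsilon>\<^sup>2 * z^3 + 2 * \<epsilon> * z)) (at z)"
    unfolding barrier_source_def [abs_def]
    by (auto intro!: derivative_eq_intros simp: algebra_simps power2_eq_square power3_eq_cube)
  then show ?thesis
    unfolding comparison_barrier_def [abs_def]
    using barrier_exponent_has_derivative [OF assms]
    by (auto intro!: derivative_eq_intros simp: algebra_simps)
qed

lemma barrier_exponent_nonneg: "0 < p \<Longrightarrow> 0 \<le> D \<Longrightarrow> 0 \<le> barrier_exponent p D z"
  unfolding barrier_exponent_def using one_plus_alpha_p_pos [of p z] by simp

lemma comparison_barrier_ge:
  assumes "0 < p" "0 \<le> D" "0 < \<epsilon>"
  shows "\<epsilon> \<le> comparison_barrier p lam \<epsilon> D z"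
proof -
  have "\<epsilon> \<le> barrier_source p lam \<epsilon> z"
    unfolding barrier_source_def using assms by simp
  then have "1 * \<epsilon> \<le> exp (barrier_exponent p D z) * barrier_source p lam \<epsilon> z"
    using barrier_exponent_nonneg [OF assms(1,2)] assms(3) by (intro mult_mono) auto
  then show ?thesis
    unfolding comparison_barrier_def by simp
qed

lemma comparison_barrier_le:
  assumes "0 < p" "0 \<le> D" "0 < \<epsilon>" "0 < z" "z \<le> R" "D * R\<^sup>2 \<le> 1"
  shows "comparison_barrier p lam \<epsilon> D z \<le> exp (3*p*(1 / alpha_p p + 1)) * barrier_source p lam \<epsilon> R"
proof -
  have "z\<^sup>2 / (1 + alpha_p p * z\<^sup>2) \<le> 1 / alpha_p p"
    using alpha_p_pos [OF assms(1)] one_plus_alpha_p_pos [OF assms(1), of z] by (simp add: field_simps)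
  moreover have "D * z\<^sup>2 \<le> D * R\<^sup>2"
    using assms by (intro mult_left_mono power_mono) auto
  ultimately have "z\<^sup>2 / (1 + alpha_p p * z\<^sup>2) + D * z\<^sup>2 \<le> 1 / alpha_p p + 1"
    using assms by linarith
  moreover have "barrier_exponent p D z = 3*p*(z\<^sup>2 / (1 + alpha_p p * z\<^sup>2) + D * z\<^sup>2)"
    unfolding barrier_exponent_def by (simp add: algebra_simps)
  ultimately have "barrier_exponent p D z \<le> 3*p*(1 / alpha_p p + 1)"
    using assms by (simp add: mult_left_mono)
  moreover have "barrier_source p lam \<epsilon> z \<le> barrier_source p lam \<epsilon> R"
    unfolding barrier_source_def using assms
    by (intro add_left_mono mult_left_mono add_mono power_mono) auto
  moreover have "0 \<le> barrier_source p lam \<epsilon> z"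
    unfolding barrier_source_def using assms by simp
  ultimately show ?thesis
    unfolding comparison_barrier_def by (intro mult_mono) auto
qed

lemma comparison_barrier_deriv_dominates:
  assumes "0 < p" "0 \<le> D" "0 < \<epsilon>" "0 < z"
  shows "p/2 * z * (2 * \<epsilon>\<^sup>2 * z\<^sup>2 + 2 * \<bar>lam\<bar> * \<epsilon>
           + 12 * (1 / (1 + alpha_p p * z\<^sup>2)\<^sup>2 + D) * comparison_barrier p lam \<epsilon> D z)
         < deriv (comparison_barrier p lam \<epsilon> D) z"
proof -
  define E where "E = exp (barrier_exponent p D z)"
  define S' where "S' = (1 + \<bar>lam\<bar>) * p * (4 * \<epsilon>\<^sup>2 * z^3 + 2 * \<epsilon> * z)"
  have "1 \<le> E"
    unfolding E_def using barrier_exponent_nonneg [OF assms(1,2)] by simp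
  have "\<epsilon>\<^sup>2 * z\<^sup>2 + \<bar>lam\<bar> * \<epsilon> < (1 + \<bar>lam\<bar>) * (4 * \<epsilon>\<^sup>2 * z\<^sup>2 + 2 * \<epsilon>)"
    using assms by (simp add: algebra_simps)
      (smt (verit) mult_nonneg_nonneg zero_le_power2 abs_ge_zero mult_pos_pos)
  then have "p * z * (\<epsilon>\<^sup>2 * z\<^sup>2 + \<bar>lam\<bar> * \<epsilon>) < p * z * ((1 + \<bar>lam\<bar>) * (4 * \<epsilon>\<^sup>2 * z\<^sup>2 + 2 * \<epsilon>))"
    using assms by (intro mult_strict_left_mono) auto
  also have "\<dots> = S'"
    unfolding S'_def by (simp add: power2_eq_square power3_eq_cube algebra_simps)
  also have "S' \<le> E * S'"
    using mult_right_mono [OF \<open>1 \<le> E\<close>, of S'] assms unfolding S'_def by simp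
  finally show ?thesis
    using DERIV_imp_deriv [OF comparison_barrier_has_derivative [OF assms(1)]]
    unfolding E_def S'_def comparison_barrier_def by (simp add: algebra_simps)
qed

lemma rescaled_forcing_bound:
  fixes W v p \<epsilon> z lam \<delta> :: real
  assumes "0 < p" "p \<le> 1" "0 < W" "W \<le> 1" "\<bar>v\<bar> \<le> \<delta>" "\<delta> \<le> 1" "0 < \<epsilon>"
  shows "\<bar>\<epsilon>\<^sup>2 * z\<^sup>2 * (W + v) - lam * \<epsilon> * (W + v)
           - (\<bar>W + v\<bar> powr (2*p) * (W + v) - \<bar>W\<bar> powr (2*p) * W)\<bar>
         \<le> 2 * \<epsilon>\<^sup>2 * z\<^sup>2 + 2 * \<bar>lam\<bar> * \<epsilon> + 12 * (W powr (2*p) + \<delta> powr (2*p)) * \<bar>v\<bar>"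
proof -
  have w: "\<bar>W + v\<bar> \<le> 2"
    using assms by linarith
  have A: "\<bar>\<epsilon>\<^sup>2 * z\<^sup>2 * (W + v)\<bar> \<le> 2 * \<epsilon>\<^sup>2 * z\<^sup>2"
    using mult_left_mono [OF w, of "\<epsilon>\<^sup>2 * z\<^sup>2"] by (simp add: abs_mult mult_ac)
  have B: "\<bar>lam * \<epsilon> * (W + v)\<bar> \<le> 2 * \<bar>lam\<bar> * \<epsilon>"
    using mult_left_mono [OF w, of "\<bar>lam\<bar> * \<epsilon>"] assms by (simp add: abs_mult mult_ac)
  have "\<bar>v\<bar> powr (2*p) \<le> \<delta> powr (2*p)"
    using assms by (intro powr_mono2) auto
  then have "12 * (W powr (2*p) + \<bar>v\<bar> powr (2*p)) * \<bar>v\<bar> \<le> 12 * (W powr (2*p) + \<delta> powr (2*p)) * \<bar>v\<bar>"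
    by (intro mult_right_mono mult_left_mono add_left_mono) auto
  then have C: "\<bar>\<bar>W + v\<bar> powr (2*p) * (W + v) - \<bar>W\<bar> powr (2*p) * W\<bar>
      \<le> 12 * (W powr (2*p) + \<delta> powr (2*p)) * \<bar>v\<bar>"
    using abs_powr_mult_perturb [of W p v] assms by simp
  show ?thesis
    using A B C by linarith
qed

lemma barrier_dominates_forcing:
  fixes p lam \<epsilon> \<delta> z v :: real
  assumes p: "0 < p" "p \<le> 1" and "0 < \<epsilon>" "\<delta> \<le> 1" "0 < z"
    and v: "\<bar>v\<bar> \<le> comparison_barrier p lam \<epsilon> (\<delta> powr (2*p)) z"
      "comparison_barrier p lam \<epsilon> (\<delta> powr (2*p)) z \<le> \<delta>"
  defines "W \<equiv> ground_state p z"
  shows "p/2 * z * \<bar>\<epsilon>\<^sup>2 * z\<^sup>2 * (W + v) - lam * \<epsilon> * (W + v)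
           - (\<bar>W + v\<bar> powr (2*p) * (W + v) - \<bar>W\<bar> powr (2*p) * W)\<bar>
         < deriv (comparison_barrier p lam \<epsilon> (\<delta> powr (2*p))) z"
proof -
  define \<Phi> where "\<Phi> = comparison_barrier p lam \<epsilon> (\<delta> powr (2*p))"
  define G where "G = \<epsilon>\<^sup>2 * z\<^sup>2 * (W + v) - lam * \<epsilon> * (W + v)
      - (\<bar>W + v\<bar> powr (2*p) * (W + v) - \<bar>W\<bar> powr (2*p) * W)"
  have "0 < W" "W \<le> 1"
    unfolding W_def using p ground_state_pos ground_state_le_one by auto
  moreover have "\<bar>v\<bar> \<le> \<delta>"
    using v by linarith
  ultimately have "\<bar>G\<bar> \<le> 2 * \<epsilon>\<^sup>2 * z\<^sup>2 + 2 * \<bar>lam\<bar> * \<epsilon> + 12 * (W powr (2*p) + \<delta> powr (2*p)) * \<bar>v\<bar>"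
    unfolding G_def using rescaled_forcing_bound [OF p] \<open>\<delta> \<le> 1\<close> \<open>0 < \<epsilon>\<close> by blast
  also have "\<dots> \<le> 2 * \<epsilon>\<^sup>2 * z\<^sup>2 + 2 * \<bar>lam\<bar> * \<epsilon> + 12 * (W powr (2*p) + \<delta> powr (2*p)) * \<Phi> z"
    using v unfolding \<Phi>_def by (intro add_left_mono mult_left_mono) auto
  finally have "p/2 * z * \<bar>G\<bar>
      \<le> p/2 * z * (2 * \<epsilon>\<^sup>2 * z\<^sup>2 + 2 * \<bar>lam\<bar> * \<epsilon> + 12 * (W powr (2*p) + \<delta> powr (2*p)) * \<Phi> z)"
    using p \<open>0 < z\<close> by (intro mult_left_mono) auto
  then show ?thesis
    using comparison_barrier_deriv_dominates [OF p(1) _ \<open>0 < \<epsilon>\<close> \<open>0 < z\<close>, of "\<delta> powr (2*p)" lam]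
    unfolding \<Phi>_def G_def W_def ground_state_powr [OF p(1)] by simp
qed

lemma barrier_source_rescale:
  fixes p lam a b T :: real
  assumes "0 < p" "0 \<le> a" "a \<le> 1" "1 \<le> b"
  shows "barrier_source p lam (b powr (-2*p)) (exp T * b powr (a*p))
           \<le> b powr (-2*p*(1-a)) * barrier_source p lam 1 (exp T)"
proof -
  define B where "B = b powr (-2*p*(1-a))"
  have "b powr (-2*p) \<le> B"
    unfolding B_def using assms by (intro powr_mono) (auto simp: algebra_simps)
  moreover have "(b powr (-2*p))\<^sup>2 * (exp T * b powr (a*p))^4 \<le> B * exp T ^ 4"
  proof -
    have "(b powr (-2*p))\<^sup>2 * (exp T * b powr (a*p))^4 = exp T ^ 4 * b powr (-4*p + 4*a*p)"
      using assms by (simp add: power_mult_distrib powr_power powr_add [symmetric] algebra_simps)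
    also have "\<dots> \<le> exp T ^ 4 * B"
      unfolding B_def using assms by (intro mult_left_mono powr_mono) (auto simp: algebra_simps)
    finally show ?thesis
      by (simp add: mult.commute)
  qed
  moreover have "b powr (-2*p) * (exp T * b powr (a*p))\<^sup>2 = B * (exp T)\<^sup>2"
    unfolding B_def using assms
    by (simp add: power_mult_distrib powr_power powr_add [symmetric] algebra_simps)
  ultimately have "barrier_source p lam (b powr (-2*p)) (exp T * b powr (a*p))
      \<le> B + (1 + \<bar>lam\<bar>) * p * (B * exp T ^ 4 + B * (exp T)\<^sup>2)"
    unfolding barrier_source_def using assms by (intro add_mono mult_left_mono) auto
  also have "\<dots> = B * barrier_source p lam 1 (exp T)"
    unfolding barrier_source_def by (simp add: algebra_simps)
  finally show ?thesis
    unfolding B_def .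
qed

lemma near_ground_state_at_origin:
  fixes w w1 :: "real \<Rightarrow> real"
  assumes p: "0 < p" and w0: "w 0 = 1" and lim: "(w \<longlongrightarrow> 1) (at_right 0)"
    and dw: "\<And>z. 0 < z \<Longrightarrow> (w has_real_derivative w1 z) (at z)"
    and "0 < \<eta>" "0 < x"
  obtains z where "0 < z" "z < x" "\<bar>w z - ground_state p z\<bar> < \<eta>"
    "\<bar>z * (w1 z - ground_state_deriv p z)\<bar> < \<eta>"
proof -
  have "isCont (ground_state p) 0"
    using ground_state_has_derivative [OF p] DERIV_isCont by blast
  then have W: "(ground_state p \<longlongrightarrow> 1) (at_right 0)"
    using ground_state_zero [of p] tendsto_within_subset [OF _ subset_UNIV] by (metis isCont_def)
  have "isCont (\<lambda>\<rho>. \<rho> * ground_state_deriv p \<rho>) 0"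
    unfolding ground_state_deriv_def using one_plus_alpha_p_pos [OF p, of 0]
    by (intro continuous_intros) auto
  then have W1: "((\<lambda>\<rho>. \<rho> * ground_state_deriv p \<rho>) \<longlongrightarrow> 0) (at_right 0)"
    using tendsto_within_subset [OF _ subset_UNIV] by (metis isCont_def mult_zero_left)
  have half: "0 < \<eta>/2"
    using \<open>0 < \<eta>\<close> by simp
  have "\<forall>\<^sub>F \<rho> in at_right 0. \<bar>w \<rho> - 1\<bar> < \<eta>/2 \<and> \<bar>ground_state p \<rho> - 1\<bar> < \<eta>/2
      \<and> \<bar>\<rho> * ground_state_deriv p \<rho>\<bar> < \<eta>/2"
    using tendstoD [OF lim half] tendstoD [OF W half] tendstoD [OF W1 half]
    by eventually_elim (auto simp: dist_real_def)
  then obtain d where "0 < d" and small: "\<And>\<rho>. 0 < \<rho> \<Longrightarrow> \<rho> < d \<Longrightarrow>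
      \<bar>w \<rho> - 1\<bar> < \<eta>/2 \<and> \<bar>ground_state p \<rho> - 1\<bar> < \<eta>/2 \<and> \<bar>\<rho> * ground_state_deriv p \<rho>\<bar> < \<eta>/2"
    by (auto simp: eventually_at_right_field)
  define r where "r = min d x / 2"
  have r: "0 < r" "r < d" "r < x"
    using \<open>0 < d\<close> \<open>0 < x\<close> unfolding r_def by auto
  have "continuous_on {0..r} w"
    unfolding continuous_on_eq_continuous_within
  proof
    fix z assume z: "z \<in> {0..r}"
    show "continuous (at z within {0..r}) w"
    proof (cases "z = 0")
      case True
      then show ?thesis
        using lim w0 r(1) by (simp add: continuous_within at_within_Icc_at_right)
    next
      case False
      then have "0 < z"
        using z by auto
      then show ?thesis
        using DERIV_isCont [OF dw] continuous_at_imp_continuous_within by blast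
    qed
  qed
  then obtain l \<xi> where \<xi>: "0 < \<xi>" "\<xi> < r" "(w has_real_derivative l) (at \<xi>)" "w r - w 0 = (r - 0) * l"
    using MVT [OF r(1)] dw real_differentiable_def by (metis greaterThanLessThan_iff)
  \<comment> \<open>The mean value point keeps \<xi> w'(\<xi>) as small as w(r) - 1.\<close>
  have "\<bar>\<xi> * w1 \<xi>\<bar> \<le> \<bar>w r - 1\<bar>"
    using \<xi> w0 DERIV_unique [OF \<xi>(3) dw [OF \<xi>(1)]] by (simp add: abs_mult mult_right_mono)
  moreover have "\<bar>w r - 1\<bar> < \<eta>/2" and \<xi>_small: "\<bar>w \<xi> - 1\<bar> < \<eta>/2"
    "\<bar>ground_state p \<xi> - 1\<bar> < \<eta>/2" "\<bar>\<xi> * ground_state_deriv p \<xi>\<bar> < \<eta>/2"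
    using small [of \<xi>] small [of r] \<xi>(1,2) r by auto
  ultimately have "\<bar>\<xi> * (w1 \<xi> - ground_state_deriv p \<xi>)\<bar> < \<eta>"
    using abs_triangle_ineq4 [of "\<xi> * w1 \<xi>" "\<xi> * ground_state_deriv p \<xi>"]
    by (simp add: right_diff_distrib)
  moreover have "\<bar>w \<xi> - ground_state p \<xi>\<bar> < \<eta>"
    using \<xi>_small(1,2) by linarith
  ultimately show ?thesis
    using that \<xi>(1,2) r by auto
qed

lemma rescale_radial_sol:
  assumes "radial_sol p lam b f" "0 < b"
  defines "w \<equiv> rescale p b f" and "\<epsilon> \<equiv> b powr (-2*p)"
  obtains w1 w2 where "w 0 = 1" "(w \<longlongrightarrow> 1) (at_right 0)"
    "\<And>z. 0 < z \<Longrightarrow> (w has_real_derivative w1 z) (at z)"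
    "\<And>z. 0 < z \<Longrightarrow> (w1 has_real_derivative w2 z) (at z)"
    "\<And>z. 0 < z \<Longrightarrow> w2 z = -(dim_p p - 1) / z * w1 z + \<epsilon>\<^sup>2 * z\<^sup>2 * w z - lam * \<epsilon> * w z
        - \<bar>w z\<bar> powr (2*p) * w z"
proof -
  define \<beta> where "\<beta> = b powr p"
  have "0 < \<beta>"
    unfolding \<beta>_def using assms by simp
  have \<beta>2: "\<beta>\<^sup>2 = b powr (2*p)"
    unfolding \<beta>_def using \<open>0 < b\<close> by (simp add: powr_power mult.commute)
  then have \<epsilon>: "\<epsilon> = 1 / \<beta>\<^sup>2"
    unfolding \<epsilon>_def by (simp add: powr_minus_divide)
  obtain f1 f2 where f0: "f 0 = b" and fd0: "(f has_real_derivative 0) (at 0 within {0..})"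
    and f: "\<And>r. r > 0 \<Longrightarrow> (f has_real_derivative f1 r) (at r) \<and> (f1 has_real_derivative f2 r) (at r) \<and>
        f2 r + (dim_p p - 1) / r * f1 r - r\<^sup>2 * f r + lam * f r + \<bar>f r\<bar> powr (2 * p) * f r = 0"
    using assms(1) unfolding radial_sol_def by blast
  define w1 where "w1 z = f1 (z / \<beta>) / (b * \<beta>)" for z
  define w2 where "w2 z = f2 (z / \<beta>) / (b * \<beta>\<^sup>2)" for z
  have w: "w z = f (z / \<beta>) / b" for z
    unfolding w_def rescale_def \<beta>_def ..
  have "w 0 = 1"
    using f0 \<open>0 < b\<close> by (simp add: w)
  moreover have "(w \<longlongrightarrow> 1) (at_right 0)"
  proof -
    have "(f \<longlongrightarrow> b) (at 0 within {0..})"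
      using DERIV_continuous [OF fd0] f0 by (simp add: continuous_within)
    then have "(f \<longlongrightarrow> b) (at_right 0)"
      by (rule tendsto_within_subset) auto
    moreover have "filterlim (\<lambda>z. z / \<beta>) (at_right 0) (at_right 0)"
      using \<open>0 < \<beta>\<close> unfolding filterlim_at
      by (auto intro!: tendsto_eq_intros eventually_at_right_less simp: eventually_at_right_field)
    ultimately have "((\<lambda>z. f (z / \<beta>)) \<longlongrightarrow> b) (at_right 0)"
      by (rule filterlim_compose)
    then have "((\<lambda>z. f (z / \<beta>) / b) \<longlongrightarrow> b / b) (at_right 0)"
      by (rule tendsto_divide) (use \<open>0 < b\<close> in auto)
    then show ?thesis
      unfolding w using \<open>0 < b\<close> by simp
  qed
  moreover have dw: "(w has_real_derivative w1 z) (at z)" and dw1: "(w1 has_real_derivative w2 z) (at z)"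
    if "0 < z" for z
  proof -
    have "z / \<beta> > 0"
      using that \<open>0 < \<beta>\<close> by simp
    then show "(w has_real_derivative w1 z) (at z)" "(w1 has_real_derivative w2 z) (at z)"
      using \<open>0 < b\<close> \<open>0 < \<beta>\<close> f [of "z / \<beta>"] unfolding w [abs_def] w1_def w2_def
      by (auto intro!: derivative_eq_intros DERIV_chain2 [where f=f] DERIV_chain2 [where f=f1]
          simp: power2_eq_square field_simps)
  qed
  moreover have "w2 z = -(dim_p p - 1) / z * w1 z + \<epsilon>\<^sup>2 * z\<^sup>2 * w z - lam * \<epsilon> * w z
      - \<bar>w z\<bar> powr (2*p) * w z" if "0 < z" for z
  proof -
    define r where "r = z / \<beta>"
    have "0 < r" "z = \<beta> * r"
      using that \<open>0 < \<beta>\<close> unfolding r_def by auto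
    have f2: "f2 r = -(dim_p p - 1) / r * f1 r + r\<^sup>2 * f r - lam * f r - \<bar>f r\<bar> powr (2*p) * f r"
      using f [OF \<open>0 < r\<close>] by linarith
    have "\<bar>f r\<bar> powr (2*p) = \<beta>\<^sup>2 * \<bar>w z\<bar> powr (2*p)"
      unfolding \<beta>2 w r_def [symmetric] using \<open>0 < b\<close> by (simp add: powr_divide)
    moreover have "f r = b * w z" "f1 r = b * \<beta> * w1 z"
      unfolding w w1_def r_def using \<open>0 < b\<close> \<open>0 < \<beta>\<close> by simp_all
    ultimately have "f2 r = b * \<beta>\<^sup>2 * (-(dim_p p - 1) / z * w1 z + \<epsilon>\<^sup>2 * z\<^sup>2 * w z - lam * \<epsilon> * w z
        - \<bar>w z\<bar> powr (2*p) * w z)"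
      unfolding f2 \<epsilon> \<open>z = \<beta> * r\<close> using \<open>0 < r\<close> \<open>0 < \<beta>\<close>
      by (simp add: field_simps power2_eq_square)
    then show ?thesis
      unfolding w2_def r_def [symmetric] using \<open>0 < b\<close> \<open>0 < \<beta>\<close> by simp
  qed
  ultimately show ?thesis
    using that by blast
qed

text \<open>Since d - 2 = 2/p, the first-order terms of the derivative of z (g' - W') combine into
  -(2/p) (g' - W'); this is why the weight p/2 is used in the comparison below.\<close>

lemma scaled_derivative_error_has_derivative:
  fixes g g' g'' :: "real \<Rightarrow> real" and p lam \<epsilon> z :: real
  assumes "0 < p" "0 < z" and dg: "(g' has_real_derivative g'' z) (at z)"
    and ode: "g'' z = -(dim_p p - 1) / z * g' z + \<epsilon>\<^sup>2 * z\<^sup>2 * g z - lam * \<epsilon> * g z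
        - \<bar>g z\<bar> powr (2*p) * g z"
  defines "W \<equiv> ground_state p z" and "W1 \<equiv> ground_state_deriv p"
  shows "((\<lambda>z. z * (g' z - W1 z)) has_real_derivative -(2/p) * (g' z - W1 z)
           + z * (\<epsilon>\<^sup>2 * z\<^sup>2 * g z - lam * \<epsilon> * g z
           - (\<bar>g z\<bar> powr (2*p) * g z - \<bar>W\<bar> powr (2*p) * W))) (at z)"
proof -
  have "((\<lambda>z. z * (g' z - W1 z)) has_real_derivative (g' z - W1 z) + z * (g'' z
      - (-(dim_p p - 1) / z * W1 z - \<bar>W\<bar> powr (2*p) * W))) (at z)"
    unfolding W_def W1_def
    using dg ground_state_deriv_has_derivative [OF \<open>0 < p\<close>, of z] \<open>0 < z\<close>
    by (auto intro!: derivative_eq_intros simp: algebra_simps)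
  moreover have "(g' z - W1 z) + z * (g'' z - (-(dim_p p - 1) / z * W1 z - \<bar>W\<bar> powr (2*p) * W))
      = -(2/p) * (g' z - W1 z) + z * (\<epsilon>\<^sup>2 * z\<^sup>2 * g z - lam * \<epsilon> * g z
        - (\<bar>g z\<bar> powr (2*p) * g z - \<bar>W\<bar> powr (2*p) * W))"
    unfolding ode dim_p_def using assms by (simp add: field_simps)
  ultimately show ?thesis
    by simp
qed

lemma rescaled_comparison:
  fixes w w1 w2 :: "real \<Rightarrow> real" and p lam \<epsilon> \<delta> R x :: real
  assumes p: "0 < p" "p \<le> 1" and "0 < \<epsilon>"
    and w0: "w 0 = 1" and lim: "(w \<longlongrightarrow> 1) (at_right 0)"
    and dw: "\<And>z. 0 < z \<Longrightarrow> (w has_real_derivative w1 z) (at z)"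
    and dw1: "\<And>z. 0 < z \<Longrightarrow> (w1 has_real_derivative w2 z) (at z)"
    and ode: "\<And>z. 0 < z \<Longrightarrow> w2 z = -(dim_p p - 1) / z * w1 z + \<epsilon>\<^sup>2 * z\<^sup>2 * w z - lam * \<epsilon> * w z
        - \<bar>w z\<bar> powr (2*p) * w z"
    and "\<delta> \<le> 1" "\<delta> powr (2*p) * R\<^sup>2 \<le> 1"
    and small: "exp (3*p*(1 / alpha_p p + 1)) * barrier_source p lam \<epsilon> R \<le> \<delta>"
    and x: "0 < x" "x \<le> R"
  shows "\<bar>w x - ground_state p x\<bar> \<le> \<delta> \<and> \<bar>x * (w1 x - ground_state_deriv p x)\<bar> \<le> 2/p * \<delta>"
proof -
  define W where "W = ground_state p"
  define W1 where "W1 = ground_state_deriv p"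
  define D where "D = \<delta> powr (2*p)"
  define \<Phi> where "\<Phi> = comparison_barrier p lam \<epsilon> D"
  define v where "v z = w z - W z" for z
  define y where "y z = z * (w1 z - W1 z)" for z
  define G where "G z = \<epsilon>\<^sup>2 * z\<^sup>2 * w z - lam * \<epsilon> * w z
      - (\<bar>w z\<bar> powr (2*p) * w z - \<bar>W z\<bar> powr (2*p) * W z)" for z
  have "0 \<le> D"
    unfolding D_def by simp
  have "D * R\<^sup>2 \<le> 1"
    unfolding D_def by fact
  have \<Phi>_le: "\<Phi> z \<le> \<delta>" if "0 < z" "z \<le> R" for z
    using order_trans [OF comparison_barrier_le [OF p(1) \<open>0 \<le> D\<close> \<open>0 < \<epsilon>\<close> that \<open>D * R\<^sup>2 \<le> 1\<close>] small]
    unfolding \<Phi>_def .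
  have dv: "(v has_real_derivative w1 z - W1 z) (at z)" if "0 < z" for z
    unfolding v_def W_def W1_def using dw [OF that] ground_state_has_derivative [OF p(1)]
    by (auto intro!: derivative_eq_intros)
  have dy: "(y has_real_derivative -(2/p) * (w1 z - W1 z) + z * G z) (at z)" if "0 < z" for z
    using scaled_derivative_error_has_derivative [where g = w and g' = w1 and g'' = w2,
        OF p(1) that dw1 [OF that] ode [OF that]]
    unfolding y_def [abs_def] G_def W_def W1_def .
  obtain x0 where x0: "0 < x0" "x0 < x" "\<bar>v x0\<bar> < \<epsilon>/2" "\<bar>y x0\<bar> < \<epsilon>/2"
    using near_ground_state_at_origin [OF p(1) w0 lim dw, of "\<epsilon>/2" x] \<open>0 < \<epsilon>\<close> x
    unfolding v_def y_def W_def W1_def by auto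
  have "\<bar>v x\<bar> + p/2 * \<bar>y x\<bar> < \<Phi> x"
  proof (rule barrier_comparison [where v = v and y = y and P = \<Phi> and x = x and x0 = x0 and R = R
        and v' = "\<lambda>z. w1 z - W1 z"
        and y' = "\<lambda>z. -(2/p) * (w1 z - W1 z) + z * G z" and P' = "deriv \<Phi>"])
    show "x0 < R"
      using x0 x by auto
    show "0 < p/2"
      using p by auto
    show "x \<in> {x0..R}"
      using x0 x by auto
    show "(v has_real_derivative w1 z - W1 z) (at z)" if "z \<in> {x0..R}" for z
      using dv that x0 by auto
    show "(y has_real_derivative -(2/p) * (w1 z - W1 z) + z * G z) (at z)" if "z \<in> {x0..R}" for z
      using dy that x0 by auto
    show "(\<Phi> has_real_derivative deriv \<Phi> z) (at z)" for z
      unfolding \<Phi>_def using comparison_barrier_has_derivative [OF p(1)] DERIV_imp_deriv by metis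
    have "p/2 * \<bar>y x0\<bar> \<le> \<bar>y x0\<bar>"
      using p by (intro mult_left_le_one_le) auto
    then show "\<bar>v x0\<bar> + p/2 * \<bar>y x0\<bar> < \<Phi> x0"
      using x0 comparison_barrier_ge [OF p(1) \<open>0 \<le> D\<close> \<open>0 < \<epsilon>\<close>, of lam x0]
      unfolding \<Phi>_def by linarith
  next
    fix z s1 s2 :: real
    assume z: "z \<in> {x0<..R}" and touch: "\<bar>v z\<bar> + p/2 * \<bar>y z\<bar> = \<Phi> z"
      and s: "\<bar>s1\<bar> = 1" "s1 * v z = \<bar>v z\<bar>" "\<bar>s2\<bar> = 1" "s2 * y z = \<bar>y z\<bar>"
    have "0 < z" "z \<le> R"
      using z x0 by auto
    have "0 \<le> p/2 * \<bar>y z\<bar>"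
      using p by simp
    then have v_le: "\<bar>v z\<bar> \<le> \<Phi> z"
      using touch by linarith
    \<comment> \<open>s2 carries the sign of w1 - W1, so the first-order terms cannot push outward.\<close>
    have "(s1 - s2) * (w1 z - W1 z) \<le> 0"
    proof -
      have "s1 * y z \<le> s2 * y z"
        using s abs_ge_self [of "s1 * y z"] by (simp add: abs_mult)
      then have "z * ((s1 - s2) * (w1 z - W1 z)) \<le> 0"
        unfolding y_def by (simp add: algebra_simps)
      then show ?thesis
        using \<open>0 < z\<close> by (simp add: mult_le_0_iff)
    qed
    moreover have "s2 * (p/2) * z * G z \<le> p/2 * z * \<bar>G z\<bar>"
      using s p \<open>0 < z\<close> abs_ge_self [of "s2 * (p/2) * z * G z"] by (simp add: abs_mult)
    moreover have "p/2 * z * \<bar>G z\<bar> < deriv \<Phi> z"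
      using barrier_dominates_forcing [OF p \<open>0 < \<epsilon>\<close> \<open>\<delta> \<le> 1\<close> \<open>0 < z\<close> v_le [unfolded \<Phi>_def D_def]
          \<Phi>_le [OF \<open>0 < z\<close> \<open>z \<le> R\<close>, unfolded \<Phi>_def D_def]]
      unfolding G_def \<Phi>_def D_def v_def W_def by simp
    moreover have "s1 * (w1 z - W1 z) + s2 * (p/2) * (-(2/p) * (w1 z - W1 z) + z * G z)
        = (s1 - s2) * (w1 z - W1 z) + s2 * (p/2) * z * G z"
      using p by (simp add: field_simps)
    ultimately show "s1 * (w1 z - W1 z) + s2 * (p/2) * (-(2/p) * (w1 z - W1 z) + z * G z) < deriv \<Phi> z"
      by linarith
  qed
  moreover have "\<Phi> x \<le> \<delta>"
    using \<Phi>_le x by simp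
  moreover have "0 \<le> p/2 * \<bar>y x\<bar>"
    using p by simp
  ultimately have "\<bar>v x\<bar> \<le> \<delta>" "p/2 * \<bar>y x\<bar> \<le> \<delta>"
    by linarith+
  then show ?thesis
    unfolding v_def y_def W_def W1_def using p by (simp add: field_simps)
qed

lemma radial_sol_profile_estimate:
  fixes p lam a b T K t :: real and f :: "real \<Rightarrow> real"
  assumes p: "0 < p" "p \<le> 1" and a: "0 \<le> a" "a \<le> 1" and "1 \<le> b"
    and K: "K = exp (3*p*(1 / alpha_p p + 1)) * barrier_source p lam 1 (exp T)"
    and \<delta>: "\<delta> = K * b powr (-2*p*(1-a))" "\<delta> \<le> 1" "\<delta> powr (2*p) * (exp T * b powr (a*p))\<^sup>2 \<le> 1"
    and f: "radial_sol p lam b f"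
    and t: "t \<le> T + a * p * ln b"
  shows "\<bar>Psi p f (t - p * ln b) - Theta_h p t\<bar> \<le> 3*K/p * b powr (-2*p*(1-a)) * exp (t/p)
     \<and> \<bar>deriv (Psi p f) (t - p * ln b) - deriv (Theta_h p) t\<bar> \<le> 3*K/p * b powr (-2*p*(1-a)) * exp (t/p)"
proof -
  have "0 < b"
    using \<open>1 \<le> b\<close> by simp
  define \<epsilon> where "\<epsilon> = b powr (-2*p)"
  define x where "x = exp t"
  obtain w1 w2 where w: "rescale p b f 0 = 1" "(rescale p b f \<longlongrightarrow> 1) (at_right 0)"
    and dw: "\<And>z. 0 < z \<Longrightarrow> (rescale p b f has_real_derivative w1 z) (at z)"
    and rest: "\<And>z. 0 < z \<Longrightarrow> (w1 has_real_derivative w2 z) (at z)"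
      "\<And>z. 0 < z \<Longrightarrow> w2 z = -(dim_p p - 1) / z * w1 z + \<epsilon>\<^sup>2 * z\<^sup>2 * rescale p b f z
        - lam * \<epsilon> * rescale p b f z - \<bar>rescale p b f z\<bar> powr (2*p) * rescale p b f z"
    using rescale_radial_sol [OF f \<open>0 < b\<close>] unfolding \<epsilon>_def by metis
  have "x \<le> exp (T + a * p * ln b)"
    unfolding x_def using t by simp
  also have "\<dots> = exp T * b powr (a*p)"
    using \<open>0 < b\<close> by (simp add: exp_add powr_def mult_ac)
  finally have "x \<le> exp T * b powr (a*p)" .
  moreover have "exp (3*p*(1 / alpha_p p + 1)) * barrier_source p lam \<epsilon> (exp T * b powr (a*p)) \<le> \<delta>"
    unfolding \<delta>(1) K \<epsilon>_def using barrier_source_rescale [OF p(1) a \<open>1 \<le> b\<close>, of lam T]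
    by (simp add: mult_left_mono mult_ac)
  ultimately have est: "\<bar>rescale p b f x - ground_state p x\<bar> \<le> \<delta>"
      "\<bar>x * (w1 x - ground_state_deriv p x)\<bar> \<le> 2/p * \<delta>"
    using rescaled_comparison [OF p _ w dw rest _ \<delta>(3)] \<delta>(2) \<open>0 < b\<close>
    unfolding x_def \<epsilon>_def by auto
  have "0 \<le> \<delta>"
    using est(1) by linarith
  then have "\<delta> \<le> 3/p * \<delta>"
    using p by (simp add: field_simps mult_left_mono)
  have "\<bar>(rescale p b f x - ground_state p x) / p + x * (w1 x - ground_state_deriv p x)\<bar>
      \<le> \<bar>rescale p b f x - ground_state p x\<bar> / p + \<bar>x * (w1 x - ground_state_deriv p x)\<bar>"
    using abs_triangle_ineq [of "(rescale p b f x - ground_state p x) / p"] p by simp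
  also have "\<dots> \<le> \<delta> / p + 2/p * \<delta>"
    using est p by (intro add_mono divide_right_mono) auto
  finally have deriv_est: "\<bar>(rescale p b f x - ground_state p x) / p + x * (w1 x - ground_state_deriv p x)\<bar>
      \<le> 3/p * \<delta>"
    by simp
  have "exp (t/p) * \<bar>rescale p b f x - ground_state p x\<bar> \<le> exp (t/p) * (3/p * \<delta>)"
    "exp (t/p) * \<bar>(rescale p b f x - ground_state p x) / p + x * (w1 x - ground_state_deriv p x)\<bar>
      \<le> exp (t/p) * (3/p * \<delta>)"
    using est(1) deriv_est \<open>\<delta> \<le> 3/p * \<delta>\<close> by (intro mult_left_mono; simp)+
  then show ?thesis
    using Psi_rescale_diff [OF \<open>0 < b\<close> p(1) dw [OF exp_gt_zero, of t]]
    unfolding x_def [symmetric] \<delta>(1) by (simp add: abs_mult mult_ac)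
qed

lemma eventually_scale_conditions:
  fixes p a K T :: real
  assumes "0 < p" "0 < a" "a < p / (1 + p)" "0 < K"
  shows "\<forall>\<^sub>F b in at_top. 1 \<le> b \<and> K * b powr (-2*p*(1-a)) \<le> 1
           \<and> (K * b powr (-2*p*(1-a))) powr (2*p) * (exp T * b powr (a*p))\<^sup>2 \<le> 1"
proof -
  have "a < p * (1 - a)"
    using assms by (simp add: field_simps)
  have "p / (1 + p) < 1"
    using assms by simp
  then have "a < 1"
    using assms by linarith
  then have "0 < 2*p*(1-a)"
    using assms by simp
  \<comment> \<open>The second condition decays like b^(-\<gamma>); \<gamma> > 0 is where a < p/(1+p) enters.\<close>
  define \<gamma> where "\<gamma> = 2*p*(2*p*(1-a) - a)"
  have "0 < p * (1 - a)"
    using \<open>a < 1\<close> assms by simp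
  then have "0 < 2*p*(1-a) - a"
    using \<open>a < p * (1 - a)\<close> by simp
  then have "0 < \<gamma>"
    unfolding \<gamma>_def using assms by simp
  have decay: "((\<lambda>b. c * b powr e) \<longlongrightarrow> 0) at_top" if "e < 0" for c e :: real
    using tendsto_mult_right_zero [OF tendsto_neg_powr [OF that filterlim_ident]] by simp
  have exp_sq: "(exp T)\<^sup>2 = exp (T * 2)"
    using exp_add [of T T] by (simp add: power2_eq_square mult_2_right)
  have ident: "(K * b powr (-2*p*(1-a))) powr (2*p) * (exp T * b powr (a*p))\<^sup>2
      = K powr (2*p) * exp (2*T) * b powr (-\<gamma>)" if "0 < b" for b
    using that \<open>0 < K\<close> unfolding \<gamma>_def
    by (simp add: powr_mult powr_powr power_mult_distrib powr_power exp_sq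
        powr_add [symmetric] algebra_simps)
  have "((\<lambda>b. K * b powr (-2*p*(1-a))) \<longlongrightarrow> 0) at_top"
    by (rule decay) (use \<open>0 < 2*p*(1-a)\<close> in simp)
  then have "\<forall>\<^sub>F b in at_top. K * b powr (-2*p*(1-a)) < 1"
    by (rule order_tendstoD) simp
  moreover have "((\<lambda>b. K powr (2*p) * exp (2*T) * b powr (-\<gamma>)) \<longlongrightarrow> 0) at_top"
    by (rule decay) (use \<open>0 < \<gamma>\<close> in simp)
  then have "\<forall>\<^sub>F b in at_top. K powr (2*p) * exp (2*T) * b powr (-\<gamma>) < 1"
    by (rule order_tendstoD) simp
  ultimately show ?thesis
    using eventually_ge_at_top [of 1]
    by eventually_elim (simp add: ident [simplified] less_imp_le)
qed

theorem mainTheorem3: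
  fixes p lam T a :: real
  assumes "0 < p" "p \<le> 1" "T > 0" "0 < a" "a < p / (1 + p)"
  shows "\<exists>b0 > 0. \<exists>C > 0. \<forall>b \<ge> b0. \<forall>f. radial_sol p lam b f \<longrightarrow>
           (\<forall>t \<le> T + a * p * ln b.
              \<bar>Psi p f (t - p * ln b) - Theta_h p t\<bar>
                \<le> C * b powr (- 2 * p * (1 - a)) * exp (t / p)
            \<and> \<bar>deriv (Psi p f) (t - p * ln b) - deriv (Theta_h p) t\<bar>
                \<le> C * b powr (- 2 * p * (1 - a)) * exp (t / p))"
proof -
  define K where "K = exp (3*p*(1 / alpha_p p + 1)) * barrier_source p lam 1 (exp T)"
  have "0 < K"
    unfolding K_def barrier_source_def using assms by (simp add: add_pos_nonneg)
  have "p / (1 + p) < 1"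
    using assms by simp
  then have "a \<le> 1"
    using assms by linarith
  obtain b0 where b0: "\<And>b. b0 \<le> b \<Longrightarrow> 1 \<le> b \<and> K * b powr (-2*p*(1-a)) \<le> 1
      \<and> (K * b powr (-2*p*(1-a))) powr (2*p) * (exp T * b powr (a*p))\<^sup>2 \<le> 1"
    using eventually_scale_conditions [OF assms(1,4,5) \<open>0 < K\<close>, of T]
    unfolding eventually_at_top_linorder by blast
  show ?thesis
  proof (intro exI conjI allI impI)
    show "0 < max b0 1" "0 < 3*K/p"
      using \<open>0 < K\<close> assms by auto
  next
    fix b f t
    assume "max b0 1 \<le> b" "radial_sol p lam b f" "t \<le> T + a * p * ln b"
    then show "\<bar>Psi p f (t - p * ln b) - Theta_h p t\<bar> \<le> 3*K/p * b powr (- 2 * p * (1 - a)) * exp (t / p)"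
      "\<bar>deriv (Psi p f) (t - p * ln b) - deriv (Theta_h p) t\<bar>
        \<le> 3*K/p * b powr (- 2 * p * (1 - a)) * exp (t / p)"
      using radial_sol_profile_estimate [OF assms(1,2) _ \<open>a \<le> 1\<close> _ K_def refl] b0 [of b] assms(4)
      by auto
  qed
qed

end
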